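(* Let $X$ be a $d$-dimensional Minkowski space whose closed unit ball is a polytope. Then $X$ contains an M-set of cardinality at least $d+1$; in particular $m(X)\geq d+1$.
   Context: A Minkowski space is a finite-dimensional real normed space $(X,\|\cdot\|)$. For a set $S\subseteq X$, its midpoint set is $M(S)=\{\tfrac12(x+y): x,y\in S,\ x\neq y\}$. A set $S\subseteq X$ is an M-set if every vector in $M(S)$ has norm exactly $1$ and every vector in $S$ has norm strictly greater than $1$. $m(X)$ denotes the largest cardinality of an M-set in $X$ if such a largest finite cardinality exists, and $m(X)=\infty$ otherwise. *)

theory Defs
  imports "HOL-Analysis.Analysis" "HOL-Library.Extended_Nat"
begin

text \<open>A norm on a finite-dimensional real vector space (given as a euclidean_space type,
  whose Euclidean norm is ignored): the Minkowski space is the pair (type, nrm).\<close>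
definition is_norm :: "('a::real_vector \<Rightarrow> real) \<Rightarrow> bool" where
  "is_norm nrm \<longleftrightarrow>
     (\<forall>x. nrm x = 0 \<longleftrightarrow> x = 0) \<and>
     (\<forall>x. nrm x \<ge> 0) \<and>
     (\<forall>x y. nrm (x + y) \<le> nrm x + nrm y) \<and>
     (\<forall>c x. nrm (scaleR c x) = \<bar>c\<bar> * nrm x)"

definition midpoint_set :: "'a::real_vector set \<Rightarrow> 'a set" where
  "midpoint_set S = {scaleR (1/2) (x + y) | x y. x \<in> S \<and> y \<in> S \<and> x \<noteq> y}"

definition is_Mset :: "('a::real_vector \<Rightarrow> real) \<Rightarrow> 'a set \<Rightarrow> bool" where
  "is_Mset nrm S \<longleftrightarrow> (\<forall>z \<in> midpoint_set S. nrm z = 1) \<and> (\<forall>x \<in> S. nrm x > 1)"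

text \<open>m(X): the supremum of cardinalities of finite M-sets (\<infinity> if unbounded;
  this equals the largest cardinality of an M-set when it exists).\<close>
definition m_X :: "('a::real_vector \<Rightarrow> real) \<Rightarrow> enat" where
  "m_X nrm = Sup {enat (card S) | S. finite S \<and> is_Mset nrm S}"

end

theory Submission
  imports Defs
begin

text \<open>
  Let the unit ball be the polytope \<open>{x. \<forall>a\<in>A. a \<bullet> x \<le> 1}\<close> for a finite irredundant set \<open>A\<close>
  of normals, and fix a facet with normal \<open>f\<close>.  Consider Euclidean disks (of dimension \<open>d - 1\<close>)
  with centre \<open>c\<close> and radius \<open>r\<close> in the facet hyperplane \<open>f \<bullet> x = 1\<close> that lie in the unit ball,
  hence on its unit sphere.  Take such a disk of maximal radius and, among those, with centre of
  maximal Euclidean norm.  Optimality forces the disk to touch the other facets in at least \<open>d\<close>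
  distinct unit directions \<open>u\<close>: otherwise the disk could be translated, contradicting the
  choice of the centre, or enlarged.  Pushing the contact points \<open>c + r u\<close> slightly outward
  gives \<open>d\<close> points of norm greater than one whose pairwise midpoints stay in the disk; together
  with \<open>-3c\<close>, whose midpoints with them lie on the reflected disk, they form an M-set of
  \<open>d + 1\<close> points.  In dimension one a two-point M-set exists in any norm.
\<close>

lemma is_norm_zero: "is_norm nrm \<Longrightarrow> nrm 0 = 0"
  by (simp add: is_norm_def)

lemma is_norm_scale: "is_norm nrm \<Longrightarrow> nrm (c *\<^sub>R x) = \<bar>c\<bar> * nrm x"
  by (simp add: is_norm_def)

lemma is_norm_uminus: "is_norm nrm \<Longrightarrow> nrm (- x) = nrm x"
  using is_norm_scale[of nrm "-1" x] by simp

lemma is_norm_pos: "is_norm nrm \<Longrightarrow> x \<noteq> 0 \<Longrightarrow> nrm x > 0"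
  unfolding is_norm_def by (metis order_less_le)

lemma is_norm_normalize:
  assumes "is_norm nrm" "x \<noteq> 0"
  shows "nrm ((1 / nrm x) *\<^sub>R x) = 1"
  using is_norm_pos[OF assms] by (simp add: is_norm_scale[OF assms(1)])

lemma is_MsetI:
  assumes "\<And>x. x \<in> S \<Longrightarrow> nrm x > 1"
    and "\<And>x y. x \<in> S \<Longrightarrow> y \<in> S \<Longrightarrow> x \<noteq> y \<Longrightarrow> nrm ((1/2) *\<^sub>R (x + y)) = 1"
  shows "is_Mset nrm S"
  using assms unfolding is_Mset_def midpoint_set_def by blast

lemma two_point_Mset:
  fixes nrm :: "'a::euclidean_space \<Rightarrow> real"
  assumes N: "is_norm nrm"
  shows "\<exists>S. finite S \<and> is_Mset nrm S \<and> card S = 2"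
proof -
  obtain e :: 'a where "e \<in> Basis" using nonempty_Basis by blast
  then have "e \<noteq> 0" by auto
  define u where "u = (1 / nrm e) *\<^sub>R e"
  have nu: "nrm u = 1" using is_norm_normalize[OF N \<open>e \<noteq> 0\<close>] by (simp add: u_def)
  have norms: "nrm (3 *\<^sub>R u) = 3" "nrm ((-5) *\<^sub>R u) = 5"
    using nu by (simp_all add: is_norm_scale[OF N] is_norm_uminus[OF N])
  have "is_Mset nrm {3 *\<^sub>R u, (-5) *\<^sub>R u}"
  proof (rule is_MsetI)
    show "nrm x > 1" if "x \<in> {3 *\<^sub>R u, (-5) *\<^sub>R u}" for x
      using that norms by auto
    have "(1/2) *\<^sub>R (x + y) = - u"
      if "x \<in> {3 *\<^sub>R u, (-5) *\<^sub>R u}" "y \<in> {3 *\<^sub>R u, (-5) *\<^sub>R u}" "x \<noteq> y" for x y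
      using that by (auto simp: scaleR_diff_left[symmetric])
    then show "nrm ((1/2) *\<^sub>R (x + y)) = 1"
      if "x \<in> {3 *\<^sub>R u, (-5) *\<^sub>R u}" "y \<in> {3 *\<^sub>R u, (-5) *\<^sub>R u}" "x \<noteq> y" for x y
      using that nu by (simp add: is_norm_uminus[OF N])
  qed
  moreover have "3 *\<^sub>R u \<noteq> (-5) *\<^sub>R u" using norms by auto
  ultimately show ?thesis by (intro exI[of _ "{3 *\<^sub>R u, (-5) *\<^sub>R u}"]) auto
qed

lemma constraints_persist_small_step:
  fixes \<alpha> \<beta> :: "'b \<Rightarrow> real"
  assumes "finite Q" "\<forall>a\<in>Q. \<alpha> a \<le> 1 \<and> (\<beta> a \<le> 0 \<or> \<alpha> a < 1)"
  shows "\<exists>t>0. \<forall>s. 0 \<le> s \<and> s \<le> t \<longrightarrow> (\<forall>a\<in>Q. \<alpha> a + s * \<beta> a \<le> 1)"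
  using assms
proof (induction Q rule: finite_induct)
  case empty
  then show ?case by (intro exI[of _ 1]) auto
next
  case (insert q Q)
  then obtain t1 where t1: "t1 > 0" "\<forall>s. 0 \<le> s \<and> s \<le> t1 \<longrightarrow> (\<forall>a\<in>Q. \<alpha> a + s * \<beta> a \<le> 1)"
    by auto
  have q: "\<alpha> q \<le> 1" "\<beta> q \<le> 0 \<or> \<alpha> q < 1" using insert.prems by auto
  define t2 where "t2 = (if \<beta> q \<le> 0 then 1 else (1 - \<alpha> q) / \<beta> q)"
  have "t2 > 0" using q by (auto simp: t2_def)
  moreover have "\<alpha> q + s * \<beta> q \<le> 1" if "0 \<le> s" "s \<le> t2" for s
  proof (cases "\<beta> q \<le> 0")
    case True
    then have "s * \<beta> q \<le> 0" using that(1) by (simp add: mult_nonneg_nonpos)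
    then show ?thesis using q(1) by simp
  next
    case False
    then have "s * \<beta> q \<le> t2 * \<beta> q" using that by (intro mult_right_mono) auto
    also have "t2 * \<beta> q = 1 - \<alpha> q" using False by (simp add: t2_def)
    finally show ?thesis by simp
  qed
  ultimately show ?case
    using t1 by (intro exI[of _ "min t1 t2"]) auto
qed

section \<open>Half-space description of a polytopal unit ball\<close>

text \<open>A polytopal unit ball is the solution set of finitely many inequalities \<open>a \<bullet> x \<le> 1\<close>:
  every defining half-space contains the unit sphere, so its offset is positive.\<close>
lemma polytope_unit_ball_halfspaces:
  fixes nrm :: "'a::euclidean_space \<Rightarrow> real"
  assumes N: "is_norm nrm" and P: "polytope {x. nrm x \<le> 1}"
  shows "\<exists>A. finite A \<and> {x. nrm x \<le> 1} = {x. \<forall>a\<in>A. a \<bullet> x \<le> 1}"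
proof -
  obtain F where F: "finite F" "{x. nrm x \<le> 1} = \<Inter>F"
      "\<forall>h\<in>F. \<exists>a b. a \<noteq> 0 \<and> h = {x. a \<bullet> x \<le> b}"
    using polytope_imp_polyhedron[OF P] unfolding polyhedron_def by meson
  have "\<forall>h\<in>F. \<exists>n b. n \<noteq> 0 \<and> (\<forall>x. x \<in> h \<longleftrightarrow> n \<bullet> x \<le> b)"
    using F(3) by (metis mem_Collect_eq)
  then obtain nv bv where nv: "\<And>h. h \<in> F \<Longrightarrow> nv h \<noteq> 0"
    and hs: "\<And>h x. h \<in> F \<Longrightarrow> x \<in> h \<longleftrightarrow> nv h \<bullet> x \<le> bv h"
    by metis
  have bpos: "bv h > 0" if h: "h \<in> F" for h
  proof -
    define y where "y = (1 / nrm (nv h)) *\<^sub>R nv h"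
    have np: "nrm (nv h) > 0" using is_norm_pos[OF N] nv[OF h] by auto
    have "nrm y = 1" using is_norm_normalize[OF N] nv[OF h] by (simp add: y_def)
    then have "y \<in> \<Inter>F" using F(2) by (metis mem_Collect_eq order_refl)
    then have "y \<in> h" using h by blast
    then have "nv h \<bullet> y \<le> bv h" using hs[OF h] by blast
    moreover have "nv h \<bullet> y > 0" using np nv[OF h] by (simp add: y_def)
    ultimately show ?thesis by simp
  qed
  have halfspace: "x \<in> h \<longleftrightarrow> ((1 / bv h) *\<^sub>R nv h) \<bullet> x \<le> 1" if "h \<in> F" for h x
    using hs[OF that] bpos[OF that] by (auto simp: divide_le_eq)
  have "{x. nrm x \<le> 1} = {x. \<forall>a\<in>(\<lambda>h. (1 / bv h) *\<^sub>R nv h) ` F. a \<bullet> x \<le> 1}"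
    unfolding F(2) using halfspace by blast
  then show ?thesis using F(1) by blast
qed

text \<open>A half-space description of a set can be made irredundant by taking one of minimal size.\<close>
lemma irredundant_halfspaces:
  fixes K :: "'a::real_inner set"
  assumes "finite A" "K = {x. \<forall>a\<in>A. a \<bullet> x \<le> 1}"
  shows "\<exists>A. finite A \<and> K = {x. \<forall>a\<in>A. a \<bullet> x \<le> 1} \<and>
           (\<forall>f\<in>A. K \<noteq> {x. \<forall>a\<in>A - {f}. a \<bullet> x \<le> 1})"
proof -
  let ?R = "\<lambda>A. finite A \<and> K = {x. \<forall>a\<in>A. a \<bullet> x \<le> 1}"
  obtain A where A: "?R A" and least: "\<And>B. ?R B \<Longrightarrow> card A \<le> card B"
    using ex_has_least_nat[of ?R A card] assms by blast
  have "K \<noteq> {x. \<forall>a\<in>A - {f}. a \<bullet> x \<le> 1}" if "f \<in> A" for f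
  proof
    assume "K = {x. \<forall>a\<in>A - {f}. a \<bullet> x \<le> 1}"
    then have "card A \<le> card (A - {f})" using least A by blast
    then show False using A that card_Diff1_less by fastforce
  qed
  then show ?thesis using A by blast
qed

lemma polytope_unit_ball_facet:
  fixes nrm :: "'a::euclidean_space \<Rightarrow> real"
  assumes N: "is_norm nrm" and P: "polytope {x. nrm x \<le> 1}"
  obtains A f z where "finite A" "\<And>x. nrm x \<le> 1 \<longleftrightarrow> (\<forall>a\<in>A. a \<bullet> x \<le> 1)"
    "f \<in> A" "f \<bullet> z = 1" "\<And>a. a \<in> A \<Longrightarrow> a \<noteq> f \<Longrightarrow> a \<bullet> z < 1"
proof -
  obtain A0 where A0: "finite A0" "{x. nrm x \<le> 1} = {x. \<forall>a\<in>A0. a \<bullet> x \<le> 1}"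
    using polytope_unit_ball_halfspaces[OF N P] by meson
  obtain A where A: "finite A" "{x. nrm x \<le> 1} = {x. \<forall>a\<in>A. a \<bullet> x \<le> 1}"
    and irred: "\<forall>f\<in>A. {x. nrm x \<le> 1} \<noteq> {x. \<forall>a\<in>A - {f}. a \<bullet> x \<le> 1}"
    using irredundant_halfspaces[OF A0] by meson
  have "A \<noteq> {}"
  proof
    assume "A = {}"
    then have "{x. nrm x \<le> 1} = UNIV" using A(2) by simp
    then show False using polytope_imp_bounded[OF P] not_bounded_UNIV by metis
  qed
  then obtain f where fA: "f \<in> A" by blast
  have "{x. nrm x \<le> 1} \<subseteq> {x. \<forall>a\<in>A - {f}. a \<bullet> x \<le> 1}" using A(2) by blast
  then obtain y where y: "\<forall>a\<in>A - {f}. a \<bullet> y \<le> 1" "\<not> nrm y \<le> 1"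
    using bspec[OF irred fA] by blast
  have fy: "f \<bullet> y > 1"
  proof (rule ccontr)
    assume "\<not> f \<bullet> y > 1"
    then have "y \<in> {x. \<forall>a\<in>A. a \<bullet> x \<le> 1}" using y(1) by auto
    then show False using A(2) y(2) by blast
  qed
  define z where "z = (1 / (f \<bullet> y)) *\<^sub>R y"
  have "f \<bullet> z = 1" using fy by (simp add: z_def)
  moreover have "a \<bullet> z < 1" if "a \<in> A" "a \<noteq> f" for a
  proof -
    have "a \<bullet> y \<le> 1" using y(1) that by blast
    then show ?thesis using fy by (simp add: z_def divide_less_eq)
  qed
  ultimately show ?thesis using that A fA by blast
qed

section \<open>An M-set from a Euclidean disk on the unit sphere\<close>

text \<open>Midpoints of distinct unit vectors have Euclidean norm uniformly below one, so they
  stay in the unit ball after a small common enlargement by \<open>1 + \<epsilon>\<close>.\<close>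
lemma unit_vectors_midpoint_slack:
  fixes U :: "'a::real_inner set"
  assumes finU: "finite U" and unit: "\<And>u. u \<in> U \<Longrightarrow> norm u = 1"
  obtains \<epsilon> :: real where "0 < \<epsilon>" "\<epsilon> \<le> 1"
    "\<And>u w. u \<in> U \<Longrightarrow> w \<in> U \<Longrightarrow> u \<noteq> w \<Longrightarrow> (1 + \<epsilon>) * norm (u + w) \<le> 2"
proof -
  define Q where "Q = {(u, w). u \<in> U \<and> w \<in> U \<and> u \<noteq> w}"
  have "Q \<subseteq> U \<times> U" by (auto simp: Q_def)
  then have "finite Q" using finU by (simp add: finite_subset)
  have "norm (u + w) < 2" if "u \<in> U" "w \<in> U" "u \<noteq> w" for u w
  proof -
    have "norm (u + w) \<le> norm u + norm w" by (rule norm_triangle_ineq)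
    moreover have "norm (u + w) \<noteq> norm u + norm w"
      using norm_triangle_eq[of u w] unit that by simp
    ultimately show ?thesis using unit that by simp
  qed
  then have "\<forall>q\<in>Q. norm (fst q + snd q) / 2 \<le> 1 \<and>
      (norm (fst q + snd q) / 2 \<le> 0 \<or> norm (fst q + snd q) / 2 < 1)"
    by (force simp: Q_def)
  then obtain t where t: "t > 0"
    "\<forall>s. 0 \<le> s \<and> s \<le> t \<longrightarrow> (\<forall>q\<in>Q. norm (fst q + snd q) / 2 + s * (norm (fst q + snd q) / 2) \<le> 1)"
    using constraints_persist_small_step[OF \<open>finite Q\<close>,
        of "\<lambda>q. norm (fst q + snd q) / 2" "\<lambda>q. norm (fst q + snd q) / 2"] by blast
  have "(1 + min t 1) * norm (u + w) \<le> 2" if "u \<in> U" "w \<in> U" "u \<noteq> w" for u w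
  proof -
    have "(u, w) \<in> Q" using that by (simp add: Q_def)
    then have "norm (u + w) / 2 + min t 1 * (norm (u + w) / 2) \<le> 1"
      using t(2)[rule_format, of "min t 1" "(u, w)"] t(1) by simp
    then show ?thesis by (simp add: algebra_simps)
  qed
  then show ?thesis using that[of "min t 1"] t(1) by simp
qed

text \<open>Suppose the unit sphere of \<open>nrm\<close> contains
  the Euclidean disk of radius \<open>r\<close> centred at \<open>c\<close> in the hyperplane through \<open>c\<close> orthogonal to \<open>f\<close>,
  and \<open>U\<close> is a set of unit directions in which the unit ball is left just beyond the rim of the
  disk.  If \<open>r < k\<close> and the midpoints \<open>c + k (u + w) / 2\<close> still lie in the disk, then the points
  \<open>c + k u\<close> (\<open>u \<in> U\<close>) together with \<open>-3c\<close> form an M-set: the midpoints of \<open>-3c\<close> with them lie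
  on the reflected disk \<open>-(c + v)\<close>.\<close>
lemma sphere_disk_Mset:
  fixes nrm :: "'a::real_inner \<Rightarrow> real"
  assumes N: "is_norm nrm" and r: "r < k" "k \<le> 2 * r"
    and disk: "\<And>v. f \<bullet> v = 0 \<Longrightarrow> norm v \<le> r \<Longrightarrow> nrm (c + v) = 1"
    and U: "\<And>u. u \<in> U \<Longrightarrow> norm u = 1 \<and> f \<bullet> u = 0"
    and beyond: "\<And>u t. u \<in> U \<Longrightarrow> t > r \<Longrightarrow> nrm (c + t *\<^sub>R u) > 1"
    and slack: "\<And>u w. u \<in> U \<Longrightarrow> w \<in> U \<Longrightarrow> u \<noteq> w \<Longrightarrow> k * norm (u + w) \<le> 2 * r"
  shows "is_Mset nrm (insert ((-3) *\<^sub>R c) ((\<lambda>u. c + k *\<^sub>R u) ` U))"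
proof -
  define X where "X u = c + k *\<^sub>R u" for u
  define p where "p = (-3) *\<^sub>R c"
  have k: "k > 0" using r by simp
  have mid_p: "nrm ((1/2) *\<^sub>R (p + X u)) = 1" if "u \<in> U" for u
  proof -
    have "(1/2) *\<^sub>R (p + X u) = - (c + (- k / 2) *\<^sub>R u)"
      using scaleR_add_left[of 1 "1/2" c] by (simp add: X_def p_def algebra_simps)
    moreover have "nrm (c + (- k / 2) *\<^sub>R u) = 1"
      by (rule disk) (use U[OF that] r in auto)
    ultimately show ?thesis by (metis is_norm_uminus[OF N])
  qed
  have mid_X: "nrm ((1/2) *\<^sub>R (X u + X w)) = 1" if "u \<in> U" "w \<in> U" "u \<noteq> w" for u w
  proof -
    have "(1/2) *\<^sub>R (X u + X w) = c + (k / 2) *\<^sub>R (u + w)"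
      using scaleR_add_left[of "1/2" "1/2" c] by (simp add: X_def algebra_simps)
    moreover have "norm ((k / 2) *\<^sub>R (u + w)) \<le> r"
      using slack[OF that] k by simp
    ultimately show ?thesis using disk U that by (simp add: inner_add_right)
  qed
  have "is_Mset nrm (insert p (X ` U))"
  proof (rule is_MsetI)
    show "nrm x > 1" if xS: "x \<in> insert p (X ` U)" for x
    proof (cases "x = p")
      case True
      then show ?thesis
        using disk[of 0] r by (simp add: p_def is_norm_scale[OF N] is_norm_uminus[OF N])
    next
      case False
      then obtain u where "u \<in> U" "x = X u" using xS by blast
      then show ?thesis using beyond r by (simp add: X_def)
    qed
    show "nrm ((1/2) *\<^sub>R (x + y)) = 1"
      if xy: "x \<in> insert p (X ` U)" "y \<in> insert p (X ` U)" "x \<noteq> y" for x y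
      using xy(1)
    proof (rule insertE)
      assume "x = p"
      then obtain w where "w \<in> U" "y = X w" using xy(2,3) by blast
      then show ?thesis using mid_p \<open>x = p\<close> by simp
    next
      assume "x \<in> X ` U"
      then obtain u where u: "u \<in> U" "x = X u" by blast
      show ?thesis using xy(2)
      proof (rule insertE)
        assume "y = p"
        then show ?thesis using mid_p[OF u(1)] u by (simp add: add.commute)
      next
        assume "y \<in> X ` U"
        then obtain w where w: "w \<in> U" "y = X w" by blast
        then have "u \<noteq> w" using u xy(3) by blast
        then show ?thesis using mid_X[OF u(1) w(1)] u w by simp
      qed
    qed
  qed
  then show ?thesis by (simp add: X_def[abs_def] p_def)
qed

text \<open>With \<open>k = (1 + \<epsilon>) r\<close> for the slack \<open>\<epsilon>\<close> of \<open>unit_vectors_midpoint_slack\<close>, the M-set above has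
  exactly \<open>|U| + 1\<close> points (the points \<open>c + k u\<close> lie on the hyperplane \<open>f \<bullet> x = 1\<close>, but \<open>-3c\<close>
  does not).\<close>
lemma Mset_from_sphere_disk:
  fixes nrm :: "'a::real_inner \<Rightarrow> real"
  assumes N: "is_norm nrm" and r: "r > 0" and fc: "f \<bullet> c = 1"
    and disk: "\<And>v. f \<bullet> v = 0 \<Longrightarrow> norm v \<le> r \<Longrightarrow> nrm (c + v) = 1"
    and finU: "finite U" and U: "\<And>u. u \<in> U \<Longrightarrow> norm u = 1 \<and> f \<bullet> u = 0"
    and beyond: "\<And>u t. u \<in> U \<Longrightarrow> t > r \<Longrightarrow> nrm (c + t *\<^sub>R u) > 1"
  shows "\<exists>S. finite S \<and> is_Mset nrm S \<and> card S = card U + 1"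
proof -
  obtain \<epsilon> where eps: "0 < \<epsilon>" "\<epsilon> \<le> 1"
    and slack: "\<And>u w. u \<in> U \<Longrightarrow> w \<in> U \<Longrightarrow> u \<noteq> w \<Longrightarrow> (1 + \<epsilon>) * norm (u + w) \<le> 2"
    using unit_vectors_midpoint_slack[OF finU] U by metis
  define k where "k = (1 + \<epsilon>) * r"
  have k: "r < k" "k \<le> 2 * r" using eps r by (auto simp: k_def)
  have "k * norm (u + w) \<le> 2 * r" if "u \<in> U" "w \<in> U" "u \<noteq> w" for u w
    using mult_left_mono[OF slack[OF that], of r] r by (simp add: k_def algebra_simps)
  then have Mset: "is_Mset nrm (insert ((-3) *\<^sub>R c) ((\<lambda>u. c + k *\<^sub>R u) ` U))"
    using sphere_disk_Mset[OF N k disk U beyond] by blast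
  have "inj_on (\<lambda>u. c + k *\<^sub>R u) U" by (rule inj_onI) (use k r in simp)
  moreover have "(-3) *\<^sub>R c \<notin> (\<lambda>u. c + k *\<^sub>R u) ` U"
  proof
    assume "(-3) *\<^sub>R c \<in> (\<lambda>u. c + k *\<^sub>R u) ` U"
    then obtain u where u: "u \<in> U" "(-3) *\<^sub>R c = c + k *\<^sub>R u" by blast
    then have "f \<bullet> ((-3) *\<^sub>R c) = f \<bullet> (c + k *\<^sub>R u)" by (simp only:)
    then show False using fc U[OF u(1)] by (simp add: inner_add_right)
  qed
  ultimately have "card (insert ((-3) *\<^sub>R c) ((\<lambda>u. c + k *\<^sub>R u) ` U)) = card U + 1"
    using finU by (simp add: card_image)
  then show ?thesis using Mset finU by (intro exI[of _ "insert ((-3) *\<^sub>R c) ((\<lambda>u. c + k *\<^sub>R u) ` U)"]) simp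
qed

text \<open>The vectors of a finite independent set all lie in a common open half-space: \<open>0\<close> is not
  in their convex hull, which can therefore be separated from \<open>0\<close>.\<close>
lemma independent_in_open_halfspace:
  fixes U :: "'a::euclidean_space set"
  assumes finU: "finite U" and ind: "independent U"
  obtains w where "\<And>u. u \<in> U \<Longrightarrow> w \<bullet> u > 0"
proof -
  have "0 \<notin> convex hull U"
  proof
    assume "0 \<in> convex hull U"
    then obtain \<mu> where \<mu>: "\<forall>x\<in>U. 0 \<le> \<mu> x" "sum \<mu> U = 1" "(\<Sum>x\<in>U. \<mu> x *\<^sub>R x) = 0"
      using convex_hull_finite[OF finU] by auto
    then have "\<exists>v\<in>U. \<mu> v \<noteq> 0" by (metis sum.neutral zero_neq_one)
    then have "dependent U" using real_vector.dependent_finite[OF finU] \<mu>(3) by blast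
    then show False using ind by simp
  qed
  then obtain w b where "0 < b" "\<forall>x\<in>convex hull U. w \<bullet> x > b"
    using separating_hyperplane_closed_0[of "convex hull U"] finite_imp_compact_convex_hull[OF finU]
    by (auto simp: compact_imp_closed)
  then have "w \<bullet> u > 0" if "u \<in> U" for u
    using hull_inc[OF that] by fastforce
  then show ?thesis using that by blast
qed

section \<open>Maximal disks in a facet of the unit ball\<close>

text \<open>A facet of a polytopal unit ball \<open>{x. \<forall>a\<in>A. a \<bullet> x \<le> 1}\<close>: its outer normal \<open>f\<close> and a point
  \<open>z\<close> of its relative interior.\<close>
locale facet =
  fixes nrm :: "'a::euclidean_space \<Rightarrow> real" and A :: "'a set" and f z :: 'a
  assumes N: "is_norm nrm" and finA: "finite A"
    and unit_ball: "\<And>x. nrm x \<le> 1 \<longleftrightarrow> (\<forall>a\<in>A. a \<bullet> x \<le> 1)"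
    and fA: "f \<in> A" and fz: "f \<bullet> z = 1" and zA: "\<And>a. a \<in> A \<Longrightarrow> a \<noteq> f \<Longrightarrow> a \<bullet> z < 1"
    and dim2: "2 \<le> DIM('a)" and bounded_ball: "bounded {x. nrm x \<le> 1}"
begin

definition proj :: "'a \<Rightarrow> 'a" where
  "proj a = a - ((a \<bullet> f) / (f \<bullet> f)) *\<^sub>R f"

text \<open>\<open>(c, r) \<in> disks\<close> says that the Euclidean disk of radius \<open>r\<close> about \<open>c\<close> in the hyperplane
  \<open>f \<bullet> x = 1\<close> lies in the unit ball; the maximum of \<open>a \<bullet> x\<close> over the disk is
  \<open>a \<bullet> c + r \<parallel>proj a\<parallel>\<close>, so this is a finite system of linear constraints on \<open>(c, r)\<close>.\<close>
definition disks :: "('a \<times> real) set" where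
  "disks = {(c, r). f \<bullet> c = 1 \<and> 0 \<le> r \<and> (\<forall>a\<in>A. a \<bullet> c + r * norm (proj a) \<le> 1)}"

text \<open>The unit directions in \<open>f\<^sup>\<bottom>\<close> in which the disk touches another facet.\<close>
definition contacts :: "'a \<Rightarrow> real \<Rightarrow> 'a set" where
  "contacts c r = (\<lambda>a. sgn (proj a)) ` {a\<in>A. proj a \<noteq> 0 \<and> a \<bullet> c + r * norm (proj a) = 1}"

lemma f_nonzero: "f \<noteq> 0"
  using fz by auto

lemma f_proj: "f \<bullet> proj a = 0"
  using f_nonzero by (simp add: proj_def inner_diff_right inner_commute)

lemma inner_proj: "f \<bullet> v = 0 \<Longrightarrow> a \<bullet> v = proj a \<bullet> v"
  by (simp add: proj_def inner_diff_left inner_commute[of v f])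

lemma normal_le_nrm:
  assumes "a \<in> A" shows "a \<bullet> x \<le> nrm x"
proof (cases "x = 0")
  case True
  then show ?thesis using is_norm_zero[OF N] by simp
next
  case False
  have "nrm ((1 / nrm x) *\<^sub>R x) \<le> 1" using is_norm_normalize[OF N False] by simp
  then have "a \<bullet> ((1 / nrm x) *\<^sub>R x) \<le> 1" using unit_ball assms by blast
  then show ?thesis using is_norm_pos[OF N False] by (simp add: divide_le_eq)
qed

text \<open>A disk in \<open>disks\<close> lies on the unit sphere: inside the ball, and on the facet hyperplane.\<close>
lemma disk_on_sphere:
  assumes cr: "(c, r) \<in> disks" and v: "f \<bullet> v = 0" "norm v \<le> r"
  shows "nrm (c + v) = 1"
proof -
  have "a \<bullet> (c + v) \<le> 1" if a: "a \<in> A" for a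
  proof -
    have "a \<bullet> (c + v) = a \<bullet> c + proj a \<bullet> v" using inner_proj[OF v(1)] by (simp add: inner_add_right)
    also have "\<dots> \<le> a \<bullet> c + norm (proj a) * norm v" using norm_cauchy_schwarz by simp
    also have "\<dots> \<le> a \<bullet> c + r * norm (proj a)" using v(2) by (simp add: mult_right_mono mult.commute)
    also have "\<dots> \<le> 1" using cr a by (auto simp: disks_def)
    finally show ?thesis .
  qed
  then have "nrm (c + v) \<le> 1" using unit_ball by blast
  moreover have "f \<bullet> (c + v) = 1" using cr v by (simp add: disks_def inner_add_right)
  then have "1 \<le> nrm (c + v)" using normal_le_nrm[OF fA, of "c + v"] by simp
  ultimately show ?thesis by simp
qed

lemma disks_closed: "closed disks"
proof -
  have "disks = {p. f \<bullet> fst p = 1} \<inter> {p. 0 \<le> snd p} \<inter>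
      (\<Inter>a\<in>A. {p. a \<bullet> fst p + snd p * norm (proj a) \<le> 1})"
    by (auto simp: disks_def)
  then show ?thesis
    by (auto intro!: closed_Int closed_INT closed_Collect_eq closed_Collect_le continuous_intros)
qed

lemma disks_bounded: "bounded disks"
proof -
  obtain R where R: "\<And>x. nrm x \<le> 1 \<Longrightarrow> norm x \<le> R"
    using bounded_ball unfolding bounded_iff by auto
  obtain w where w: "w \<noteq> 0" "orthogonal f w" using orthogonal_to_vector_exists[OF dim2] by blast
  define w1 where "w1 = sgn w"
  have w1: "norm w1 = 1" "f \<bullet> w1 = 0"
    using w by (auto simp: w1_def orthogonal_def norm_sgn sgn_div_norm)
  have "norm (c, r) \<le> 3 * R" if cr: "(c, r) \<in> disks" for c r
  proof -
    have r0: "0 \<le> r" using cr by (simp add: disks_def)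
    have nc: "norm c \<le> R" using R disk_on_sphere[OF cr, of 0] r0 by simp
    have "norm (c + r *\<^sub>R w1) \<le> R" using R disk_on_sphere[OF cr, of "r *\<^sub>R w1"] r0 w1 by simp
    then have "r \<le> 2 * R"
      using norm_triangle_ineq4[of "c + r *\<^sub>R w1" c] nc r0 w1 by simp
    then show ?thesis using norm_Pair_le[of c r] nc r0 by simp
  qed
  then show ?thesis unfolding bounded_iff by fast
qed

lemma positive_disk_exists: "\<exists>t>0. (z, t) \<in> disks"
proof -
  have "proj f = 0" using f_nonzero by (simp add: proj_def)
  then have "\<forall>a\<in>A. a \<bullet> z \<le> 1 \<and> (norm (proj a) \<le> 0 \<or> a \<bullet> z < 1)"
    using zA fz by (metis less_eq_real_def norm_zero order_refl)
  then obtain t where "t > 0" "\<forall>a\<in>A. a \<bullet> z + t * norm (proj a) \<le> 1"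
    using constraints_persist_small_step[OF finA, of "\<lambda>a. a \<bullet> z" "\<lambda>a. norm (proj a)"] by auto
  then show ?thesis using fz by (auto simp: disks_def)
qed

lemma optimal_disk_exists:
  obtains c r where "(c, r) \<in> disks" "r > 0" "\<And>c' r'. (c', r') \<in> disks \<Longrightarrow> r' \<le> r"
    "\<And>c'. (c', r) \<in> disks \<Longrightarrow> norm c' \<le> norm c"
proof -
  have cpt: "compact disks" using disks_closed disks_bounded by (simp add: compact_eq_bounded_closed)
  obtain t where t: "t > 0" "(z, t) \<in> disks" using positive_disk_exists by blast
  moreover have "continuous_on disks snd" by (intro continuous_intros)
  ultimately obtain p where p: "p \<in> disks" "\<forall>q\<in>disks. snd q \<le> snd p"
    using continuous_attains_sup[OF cpt, of snd] by blast
  define r where "r = snd p"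
  have "r > 0" using p(2) t by (force simp: r_def)
  have "compact (disks \<inter> {q. snd q = r})"
    using cpt by (intro compact_Int_closed closed_Collect_eq) (auto intro: continuous_intros)
  then have "compact (fst ` (disks \<inter> {q. snd q = r}))"
    by (intro compact_continuous_image) (auto intro: continuous_intros)
  moreover have "fst p \<in> fst ` (disks \<inter> {q. snd q = r})" using p(1) by (auto simp: r_def)
  ultimately obtain c where c: "c \<in> fst ` (disks \<inter> {q. snd q = r})"
    and cmax: "\<And>c'. c' \<in> fst ` (disks \<inter> {q. snd q = r}) \<Longrightarrow> norm c' \<le> norm c"
    using continuous_attains_sup[of _ norm] by (metis continuous_on_norm_id empty_iff)
  show ?thesis
  proof (rule that)
    show "(c, r) \<in> disks" using c by auto
    show "r > 0" by fact
    show "r' \<le> r" if "(c', r') \<in> disks" for c' r' using p(2) that by (force simp: r_def)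
    show "norm c' \<le> norm c" if "(c', r) \<in> disks" for c' using cmax that by force
  qed
qed

lemma disk_perturb:
  assumes cr: "(c, r) \<in> disks" and f\<delta>: "f \<bullet> \<delta> = 0" and \<sigma>: "0 \<le> \<sigma>"
    and touching: "\<And>a. a \<in> A \<Longrightarrow> proj a \<noteq> 0 \<Longrightarrow> a \<bullet> c + r * norm (proj a) = 1 \<Longrightarrow>
      a \<bullet> \<delta> + \<sigma> * norm (proj a) \<le> 0"
  obtains t where "t > 0" "(c + t *\<^sub>R \<delta>, r + t * \<sigma>) \<in> disks"
proof -
  define \<alpha> where "\<alpha> a = a \<bullet> c + r * norm (proj a)" for a
  define \<beta> where "\<beta> a = a \<bullet> \<delta> + \<sigma> * norm (proj a)" for a
  have "\<alpha> a \<le> 1 \<and> (\<beta> a \<le> 0 \<or> \<alpha> a < 1)" if a: "a \<in> A" for a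
  proof -
    have "\<alpha> a \<le> 1" using cr a by (simp add: disks_def \<alpha>_def)
    moreover have "\<beta> a \<le> 0" if "\<alpha> a = 1"
    proof (cases "proj a = 0")
      case True
      then show ?thesis using inner_proj[OF f\<delta>, of a] by (simp add: \<beta>_def)
    next
      case False
      then show ?thesis using touching a that by (simp add: \<alpha>_def \<beta>_def)
    qed
    ultimately show ?thesis by linarith
  qed
  then obtain t where "t > 0" "\<forall>a\<in>A. \<alpha> a + t * \<beta> a \<le> 1"
    using constraints_persist_small_step[OF finA, of \<alpha> \<beta>] by auto
  moreover have "a \<bullet> (c + t *\<^sub>R \<delta>) + (r + t * \<sigma>) * norm (proj a) = \<alpha> a + t * \<beta> a" for a
    by (simp add: \<alpha>_def \<beta>_def inner_add_right algebra_simps)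
  ultimately have "(c + t *\<^sub>R \<delta>, r + t * \<sigma>) \<in> disks"
    using cr f\<delta> \<sigma> by (auto simp: disks_def inner_add_right)
  with \<open>t > 0\<close> show ?thesis using that by blast
qed

lemma contactsE:
  assumes "u \<in> contacts c r"
  obtains a where "a \<in> A" "proj a \<noteq> 0" "a \<bullet> c + r * norm (proj a) = 1"
    "proj a = norm (proj a) *\<^sub>R u" "norm u = 1" "f \<bullet> u = 0"
  using assms f_proj unfolding contacts_def
  by (auto simp: sgn_div_norm norm_sgn)

lemma contacts_beyond:
  assumes "u \<in> contacts c r" "t > r"
  shows "nrm (c + t *\<^sub>R u) > 1"
proof -
  obtain a where a: "a \<in> A" "proj a \<noteq> 0" "a \<bullet> c + r * norm (proj a) = 1"
    "proj a = norm (proj a) *\<^sub>R u" "norm u = 1" "f \<bullet> u = 0"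
    using contactsE[OF assms(1)] by blast
  have "a \<bullet> u = norm (proj a) * (u \<bullet> u)"
    using inner_proj[OF a(6), of a] a(4) by (metis inner_scaleR_left)
  then have "a \<bullet> u = norm (proj a)" using a(5) by (simp add: power2_norm_eq_inner[symmetric])
  then have "a \<bullet> (c + t *\<^sub>R u) = 1 + (t - r) * norm (proj a)"
    using a(3) by (simp add: inner_add_right algebra_simps)
  also have "\<dots> > 1" using assms(2) a(2) by simp
  finally show ?thesis using normal_le_nrm[OF a(1)] by (meson less_le_trans)
qed

text \<open>For an optimal disk, \<open>f\<close> and the contact directions span the space: otherwise the centre
  could be moved both ways along a direction orthogonal to all of them, and one of the two
  moves would increase the Euclidean norm of the centre (parallelogram law).\<close>
lemma contacts_span:
  assumes cr: "(c, r) \<in> disks" and cmax: "\<And>c'. (c', r) \<in> disks \<Longrightarrow> norm c' \<le> norm c"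
  shows "span (insert f (contacts c r)) = UNIV"
proof (rule ccontr)
  assume "span (insert f (contacts c r)) \<noteq> UNIV"
  then have "dim (insert f (contacts c r)) < DIM('a)"
    using dim_eq_full dim_subset_UNIV[of "insert f (contacts c r)"] le_neq_implies_less by blast
  then obtain \<delta> where \<delta>: "\<delta> \<noteq> 0" "\<And>y. y \<in> span (insert f (contacts c r)) \<Longrightarrow> orthogonal \<delta> y"
    using orthogonal_to_subspace_exists by blast
  have f\<delta>: "f \<bullet> \<delta> = 0" using \<delta>(2)[of f] by (simp add: span_base orthogonal_def inner_commute)
  have touching: "a \<bullet> \<delta> = 0"
    if "a \<in> A" "proj a \<noteq> 0" "a \<bullet> c + r * norm (proj a) = 1" for a
  proof -
    have "sgn (proj a) \<in> contacts c r" using that by (auto simp: contacts_def)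
    then have "sgn (proj a) \<in> span (insert f (contacts c r))" by (simp add: span_base)
    then have "orthogonal \<delta> (sgn (proj a))" using \<delta>(2) by blast
    then have "sgn (proj a) \<bullet> \<delta> = 0" by (simp add: orthogonal_def inner_commute)
    then show ?thesis using inner_proj[OF f\<delta>, of a] that(2) by (simp add: sgn_div_norm)
  qed
  obtain t1 where t1: "t1 > 0" "(c + t1 *\<^sub>R \<delta>, r) \<in> disks"
    using disk_perturb[OF cr f\<delta> order_refl] touching by auto
  obtain t2 where t2: "t2 > 0" "(c + t2 *\<^sub>R (- \<delta>), r) \<in> disks"
    using disk_perturb[OF cr _ order_refl, of "- \<delta>"] f\<delta> touching by auto
  have "(norm (c + t1 *\<^sub>R \<delta>))\<^sup>2 = (norm c)\<^sup>2 + t1 * (2 * (c \<bullet> \<delta>) + t1 * (norm \<delta>)\<^sup>2)"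
    by (simp only: power2_norm_eq_inner)
      (simp add: inner_add_left inner_add_right inner_commute[of \<delta> c] power2_eq_square algebra_simps)
  moreover have "(norm (c + t1 *\<^sub>R \<delta>))\<^sup>2 \<le> (norm c)\<^sup>2"
    using cmax[OF t1(2)] by (simp add: power_mono)
  ultimately have "t1 * (2 * (c \<bullet> \<delta>) + t1 * (norm \<delta>)\<^sup>2) \<le> 0" by linarith
  then have h1: "2 * (c \<bullet> \<delta>) + t1 * (norm \<delta>)\<^sup>2 \<le> 0" using t1(1) by (simp add: mult_le_0_iff)
  have "(norm (c + t2 *\<^sub>R (- \<delta>)))\<^sup>2 = (norm c)\<^sup>2 + t2 * (- 2 * (c \<bullet> \<delta>) + t2 * (norm \<delta>)\<^sup>2)"
    by (simp only: power2_norm_eq_inner)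
      (simp add: inner_add_left inner_add_right inner_commute[of \<delta> c] power2_eq_square algebra_simps)
  moreover have "(norm (c + t2 *\<^sub>R (- \<delta>)))\<^sup>2 \<le> (norm c)\<^sup>2"
    using cmax[OF t2(2)] by (simp add: power_mono)
  ultimately have "t2 * (- 2 * (c \<bullet> \<delta>) + t2 * (norm \<delta>)\<^sup>2) \<le> 0" by linarith
  then have h2: "- 2 * (c \<bullet> \<delta>) + t2 * (norm \<delta>)\<^sup>2 \<le> 0" using t2(1) by (simp add: mult_le_0_iff)
  have "(t1 + t2) * (norm \<delta>)\<^sup>2 > 0" using t1(1) t2(1) \<delta>(1) by simp
  then show False using h1 h2 by (simp add: algebra_simps)
qed

text \<open>For an optimal disk there are at least \<open>d\<close> contact directions: otherwise \<open>f\<close> and the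
  contact directions form a basis, the contact directions lie in an open half-space, and moving
  the centre away from them lets the radius grow.\<close>
lemma contacts_card:
  assumes cr: "(c, r) \<in> disks" and rmax: "\<And>c' r'. (c', r') \<in> disks \<Longrightarrow> r' \<le> r"
    and span: "span (insert f (contacts c r)) = UNIV"
  shows "DIM('a) \<le> card (contacts c r)"
proof (rule ccontr)
  let ?U = "contacts c r"
  assume "\<not> DIM('a) \<le> card ?U"
  moreover have finU: "finite ?U" using finA by (simp add: contacts_def)
  ultimately have "card (insert f ?U) \<le> DIM('a)" by (simp add: card_insert_if)
  then have "independent (insert f ?U)"
    by (intro card_le_dim_spanning[of _ UNIV]) (use span finU in auto)
  then have "independent ?U" by (rule independent_mono) blast
  then obtain w where w: "\<And>u. u \<in> ?U \<Longrightarrow> w \<bullet> u > 0"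
    using independent_in_open_halfspace[OF finU] by blast
  define \<delta> where "\<delta> = - proj w"
  have f\<delta>: "f \<bullet> \<delta> = 0" using f_proj by (simp add: \<delta>_def)
  define \<sigma> where "\<sigma> = Min (insert 1 ((\<lambda>u. - (u \<bullet> \<delta>)) ` ?U))"
  have "\<sigma> > 0"
  proof -
    have "u \<bullet> \<delta> < 0" if "u \<in> ?U" for u
    proof -
      have "f \<bullet> u = 0" using contactsE[OF that] by blast
      then have "proj w \<bullet> u = w \<bullet> u" by (rule inner_proj[symmetric])
      then show ?thesis using w[OF that] by (simp add: \<delta>_def inner_commute)
    qed
    then show ?thesis using finU by (simp add: \<sigma>_def)
  qed
  have touching: "a \<bullet> \<delta> + \<sigma> * norm (proj a) \<le> 0"
    if a: "a \<in> A" "proj a \<noteq> 0" "a \<bullet> c + r * norm (proj a) = 1" for a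
  proof -
    have u: "sgn (proj a) \<in> ?U" using a by (auto simp: contacts_def)
    then have "\<sigma> \<le> - (sgn (proj a) \<bullet> \<delta>)" using finU by (simp add: \<sigma>_def)
    then have "\<sigma> * norm (proj a) \<le> - (sgn (proj a) \<bullet> \<delta>) * norm (proj a)"
      by (rule mult_right_mono) simp
    moreover have "a \<bullet> \<delta> = norm (proj a) * (sgn (proj a) \<bullet> \<delta>)"
      using inner_proj[OF f\<delta>, of a] a(2) by (simp add: sgn_div_norm)
    ultimately show ?thesis by (simp add: algebra_simps)
  qed
  obtain t where t: "t > 0" "(c + t *\<^sub>R \<delta>, r + t * \<sigma>) \<in> disks"
    using disk_perturb[OF cr f\<delta> less_imp_le[OF \<open>\<sigma> > 0\<close>]] touching by blast
  have "r + t * \<sigma> \<le> r" using rmax[OF t(2)] .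
  moreover have "t * \<sigma> > 0" using t(1) \<open>\<sigma> > 0\<close> by simp
  ultimately show False by simp
qed

theorem facet_Mset: "\<exists>S. finite S \<and> is_Mset nrm S \<and> card S = DIM('a) + 1"
proof -
  obtain c r where cr: "(c, r) \<in> disks" "r > 0"
    and rmax: "\<And>c' r'. (c', r') \<in> disks \<Longrightarrow> r' \<le> r"
    and cmax: "\<And>c'. (c', r) \<in> disks \<Longrightarrow> norm c' \<le> norm c"
    using optimal_disk_exists by blast
  have "DIM('a) \<le> card (contacts c r)"
    using contacts_card[OF cr(1) rmax contacts_span[OF cr(1) cmax]] .
  then obtain U where U: "U \<subseteq> contacts c r" "card U = DIM('a)" "finite U"
    by (rule obtain_subset_with_card_n)
  have "\<exists>S. finite S \<and> is_Mset nrm S \<and> card S = card U + 1"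
  proof (rule Mset_from_sphere_disk[OF N cr(2), of f c U])
    show "f \<bullet> c = 1" using cr(1) by (simp add: disks_def)
    show "nrm (c + v) = 1" if "f \<bullet> v = 0" "norm v \<le> r" for v
      using disk_on_sphere[OF cr(1) that] .
    show "finite U" by (rule U(3))
    show "norm u = 1 \<and> f \<bullet> u = 0" if "u \<in> U" for u
      using contactsE[of u c r] U(1) that by blast
    show "nrm (c + t *\<^sub>R u) > 1" if "u \<in> U" "t > r" for u t
      using contacts_beyond[of u c r t] U(1) that by blast
  qed
  then show ?thesis using U(2) by simp
qed

end

theorem mainTheorem18:
  fixes nrm :: "'a::euclidean_space \<Rightarrow> real"
  assumes "is_norm nrm"
    and "polytope {x. nrm x \<le> 1}"
  shows "(\<exists>S. finite S \<and> is_Mset nrm S \<and> card S \<ge> DIM('a) + 1) \<and>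
         m_X nrm \<ge> enat (DIM('a) + 1)"
proof -
  have "\<exists>S. finite S \<and> is_Mset nrm S \<and> card S = DIM('a) + 1"
  proof (cases "DIM('a) = 1")
    case True
    then show ?thesis using two_point_Mset[OF assms(1)] by (simp add: numeral_2_eq_2)
  next
    case False
    then have dim2: "2 \<le> DIM('a)" using DIM_positive[where 'a='a] by linarith
    obtain A f z where "finite A" "\<And>x. nrm x \<le> 1 \<longleftrightarrow> (\<forall>a\<in>A. a \<bullet> x \<le> 1)"
      "f \<in> A" "f \<bullet> z = 1" "\<And>a. a \<in> A \<Longrightarrow> a \<noteq> f \<Longrightarrow> a \<bullet> z < 1"
      using polytope_unit_ball_facet[OF assms] by blast
    then interpret facet nrm A f z
      using assms(1) dim2 polytope_imp_bounded[OF assms(2)] by unfold_locales auto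
    show ?thesis by (rule facet_Mset)
  qed
  then obtain S where S: "finite S" "is_Mset nrm S" "card S = DIM('a) + 1" by blast
  moreover have "enat (card S) \<le> m_X nrm"
    unfolding m_X_def using S by (intro Sup_upper) blast
  ultimately show ?thesis by auto
qed

end
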